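(* Let $(A,\succ,\prec)$ be an anti-pre-Novikov algebra, $s\in A\otimes A$ define a factorizable anti-pre-Novikov bialgebra $(A,\succ,\prec,\Delta_{\succ,s},\Delta_{\prec,s})$, and $\lambda\in k$ nonzero; let $(A,\succ,\prec,P,\omega)$ be the corresponding quadratic Rota–Baxter anti-pre-Novikov algebra of weight $\lambda$, i.e. $\omega(x,y)=-\lambda\langle T_{s+\tau(s)}^{-1}(x),y\rangle$ and $P=T_s\omega^\sharp$. Then $(A,\succ,\prec,\Delta_{\succ,\tau(s)},\Delta_{\prec,\tau(s)})$ is a factorizable anti-pre-Novikov bialgebra, and its corresponding quadratic Rota–Baxter anti-pre-Novikov algebra of weight $\lambda$ (with $\omega'(x,y)=-\lambda\langle T_{\tau(s)+s}^{-1}(x),y\rangle$ and $P'=T_{\tau(s)}\omega'^\sharp$) is $(A,\succ,\prec,-\lambda I-P,\omega)$.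
   Context: $A$ is finite-dimensional over a field $k$. An anti-pre-Novikov algebra is $(A,\succ,\prec)$ such that with $x\circ y=x\succ y+x\prec y$: $(x\circ y-y\circ x)\succ z=y\succ(x\succ z)-x\succ(y\succ z)$; $x\prec(y\circ z)=(y\succ x)\prec z-(x\prec y)\prec z-y\succ(x\prec z)$; $(x\circ y)\succ z=-(x\succ z)\prec y$; $(x\prec y)\prec z=(x\prec z)\prec y$; $(x\circ y-y\circ x)\prec z=x\succ(y\circ z)-y\succ(x\circ z)$. Notation: $x\odot y=x\succ y+y\prec x$; $L_\ast(x)y=x\ast y$, $R_\ast(x)y=y\ast x$; $L_{\star}=L_{\circ}+R_{\circ}$, $L_{\odot}=L_{\succ}+R_{\prec}$; $\tau$ is the flip; $T_r:A^*\to A$, $\langle T_r(\zeta),\eta\rangle=\langle r,\zeta\otimes\eta\rangle$; for a bilinear form $\omega$, $\omega^\sharp:A\to A^*$, $\langle\omega^\sharp(x),y\rangle=\omega(x,y)$. $r$ is invariant if $(I\otimes L_{\star}(x)-L_{\succ}(x)\otimes I)r=0$ and $(L_{\circ}(x)\otimes I-I\otimes L_{\odot}(x))r=0$ for all $x$. For $s=\sum_i a_i\otimes b_i$ the APN-YBE is $\sum_{i,j}a_i\circ a_j\otimes b_i\otimes b_j+\sum_{i,j}a_j\otimes a_i\otimes(b_i\odot b_j)+\sum_{i,j}a_i\otimes(b_i\prec a_j)\otimes b_j=0$. With $\Delta_{\succ,r}(x)=(I\otimes L_{\star}(x)-L_{\succ}(x)\otimes I)r$, $\Delta_{\prec,r}(x)=(L_{\circ}(x)\otimes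 I-I\otimes L_{\odot}(x))r$, the datum $(A,\succ,\prec,\Delta_{\succ,r},\Delta_{\prec,r})$ is a factorizable anti-pre-Novikov bialgebra when $r$ solves the APN-YBE, $r+\tau(r)$ is invariant, and $T_{r+\tau(r)}$ is a linear isomorphism. A quadratic Rota–Baxter anti-pre-Novikov algebra of weight $\lambda$ is $(A,\succ,\prec,P,\omega)$ with $P(x)\prec P(y)=P(P(x)\prec y+x\prec P(y)+\lambda x\prec y)$, $P(x)\succ P(y)=P(P(x)\succ y+x\succ P(y)+\lambda x\succ y)$, $\omega$ non-degenerate symmetric with $\omega(x\prec y,z)=-\omega(x,z\circ y)$, $\omega(x\succ y,z)=\omega(x\circ z+z\circ x,y)$, and $\omega(P(x),y)+\omega(x,P(y))+\lambda\omega(x,y)=0$. *)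

theory Defs
  imports Main
begin

text \<open>The finite-dimensional algebra A over the field 'k is represented in
coordinates with respect to a basis indexed by the finite type 'i: A = ('i => 'k).
The dual space A* is represented by the same coordinate space, with the natural
pairing. Elements of A (x) A are coefficient arrays 'i => 'i => 'k (coefficient of
e_a (x) e_b), elements of A (x) A (x) A are arrays 'i => 'i => 'i => 'k.\<close>

type_synonym ('i, 'k) vec = "'i \<Rightarrow> 'k"
type_synonym ('i, 'k) ten2 = "'i \<Rightarrow> 'i \<Rightarrow> 'k"
type_synonym ('i, 'k) ten3 = "'i \<Rightarrow> 'i \<Rightarrow> 'i \<Rightarrow> 'k"
type_synonym ('i, 'k) prod = "('i, 'k) vec \<Rightarrow> ('i, 'k) vec \<Rightarrow> ('i, 'k) vec"

definition vadd :: "('i, 'k::field) vec \<Rightarrow> ('i, 'k) vec \<Rightarrow> ('i, 'k) vec" where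
  "vadd x y = (\<lambda>i. x i + y i)"

definition vsmul :: "'k::field \<Rightarrow> ('i, 'k) vec \<Rightarrow> ('i, 'k) vec" where
  "vsmul c x = (\<lambda>i. c * x i)"

definition vsub :: "('i, 'k::field) vec \<Rightarrow> ('i, 'k) vec \<Rightarrow> ('i, 'k) vec" where
  "vsub x y = (\<lambda>i. x i - y i)"

definition bvec :: "'i \<Rightarrow> ('i, 'k::field) vec" where
  "bvec a = (\<lambda>i. if i = a then 1 else 0)"

definition bilinear_op :: "('i, 'k::field) prod \<Rightarrow> bool" where
  "bilinear_op m \<longleftrightarrow>
     (\<forall>x y z. m (vadd x y) z = vadd (m x z) (m y z)) \<and>
     (\<forall>x y z. m x (vadd y z) = vadd (m x y) (m x z)) \<and>
     (\<forall>c x y. m (vsmul c x) y = vsmul c (m x y)) \<and>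
     (\<forall>c x y. m x (vsmul c y) = vsmul c (m x y))"

definition circ :: "('i, 'k::field) prod \<Rightarrow> ('i, 'k) prod \<Rightarrow> ('i, 'k) prod" where
  "circ sc pr x y = vadd (sc x y) (pr x y)"

definition odot :: "('i, 'k::field) prod \<Rightarrow> ('i, 'k) prod \<Rightarrow> ('i, 'k) prod" where
  "odot sc pr x y = vadd (sc x y) (pr y x)"

definition Lstar :: "('i, 'k::field) prod \<Rightarrow> ('i, 'k) prod \<Rightarrow> ('i, 'k) vec \<Rightarrow> ('i, 'k) vec \<Rightarrow> ('i, 'k) vec" where
  "Lstar sc pr x y = vadd (circ sc pr x y) (circ sc pr y x)"

definition Lodot :: "('i, 'k::field) prod \<Rightarrow> ('i, 'k) prod \<Rightarrow> ('i, 'k) vec \<Rightarrow> ('i, 'k) vec \<Rightarrow> ('i, 'k) vec" where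
  "Lodot sc pr x y = odot sc pr x y"

definition anti_pre_novikov :: "('i, 'k::field) prod \<Rightarrow> ('i, 'k) prod \<Rightarrow> bool" where
  "anti_pre_novikov sc pr \<longleftrightarrow>
     (\<forall>x y z. sc (vsub (circ sc pr x y) (circ sc pr y x)) z = vsub (sc y (sc x z)) (sc x (sc y z))) \<and>
     (\<forall>x y z. pr x (circ sc pr y z) = vsub (vsub (pr (sc y x) z) (pr (pr x y) z)) (sc y (pr x z))) \<and>
     (\<forall>x y z. sc (circ sc pr x y) z = vsmul (-1) (pr (sc x z) y)) \<and>
     (\<forall>x y z. pr (pr x y) z = pr (pr x z) y) \<and>
     (\<forall>x y z. pr (vsub (circ sc pr x y) (circ sc pr y x)) z = vsub (sc x (circ sc pr y z)) (sc y (circ sc pr x z)))"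

text \<open>(f (x) g) r for linear maps f, g on A and r in A (x) A.\<close>
definition tapp :: "(('i::finite, 'k::field) vec \<Rightarrow> ('i, 'k) vec) \<Rightarrow> (('i, 'k) vec \<Rightarrow> ('i, 'k) vec)
                    \<Rightarrow> ('i, 'k) ten2 \<Rightarrow> ('i, 'k) ten2" where
  "tapp f g r = (\<lambda>i j. \<Sum>a\<in>UNIV. \<Sum>b\<in>UNIV. r a b * f (bvec a) i * g (bvec b) j)"

definition tflip :: "('i, 'k) ten2 \<Rightarrow> ('i, 'k) ten2" where
  "tflip r = (\<lambda>i j. r j i)"

definition tadd :: "('i, 'k::field) ten2 \<Rightarrow> ('i, 'k) ten2 \<Rightarrow> ('i, 'k) ten2" where
  "tadd r t = (\<lambda>i j. r i j + t i j)"

definition t3 :: "('i, 'k::field) vec \<Rightarrow> ('i, 'k) vec \<Rightarrow> ('i, 'k) vec \<Rightarrow> ('i, 'k) ten3" where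
  "t3 x y z = (\<lambda>p q r. x p * y q * z r)"

definition invariant_tensor :: "('i::finite, 'k::field) prod \<Rightarrow> ('i, 'k) prod \<Rightarrow> ('i, 'k) ten2 \<Rightarrow> bool" where
  "invariant_tensor sc pr r \<longleftrightarrow>
     (\<forall>x. tapp id (Lstar sc pr x) r = tapp (sc x) id r) \<and>
     (\<forall>x. tapp (circ sc pr x) id r = tapp id (Lodot sc pr x) r)"

definition apn_ybe :: "('i::finite, 'k::field) prod \<Rightarrow> ('i, 'k) prod \<Rightarrow> ('i, 'k) ten2 \<Rightarrow> bool" where
  "apn_ybe sc pr s \<longleftrightarrow>
     (\<lambda>p q r. \<Sum>a\<in>UNIV. \<Sum>b\<in>UNIV. \<Sum>c\<in>UNIV. \<Sum>d\<in>UNIV. s a b * s c d *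
        ( t3 (circ sc pr (bvec a) (bvec c)) (bvec b) (bvec d) p q r
        + t3 (bvec c) (bvec a) (odot sc pr (bvec b) (bvec d)) p q r
        + t3 (bvec a) (pr (bvec b) (bvec c)) (bvec d) p q r)) = (\<lambda>p q r. 0)"

definition pairing :: "('i::finite, 'k::field) vec \<Rightarrow> ('i, 'k) vec \<Rightarrow> 'k" where
  "pairing \<zeta> x = (\<Sum>i\<in>UNIV. \<zeta> i * x i)"

text \<open>T_r : A* -> A with <T_r zeta, eta> = <r, zeta (x) eta>.\<close>
definition Tmap :: "('i::finite, 'k::field) ten2 \<Rightarrow> ('i, 'k) vec \<Rightarrow> ('i, 'k) vec" where
  "Tmap r \<zeta> = (\<lambda>b. \<Sum>a\<in>UNIV. \<zeta> a * r a b)"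

definition factorizable :: "('i::finite, 'k::field) prod \<Rightarrow> ('i, 'k) prod \<Rightarrow> ('i, 'k) ten2 \<Rightarrow> bool" where
  "factorizable sc pr r \<longleftrightarrow>
     apn_ybe sc pr r \<and> invariant_tensor sc pr (tadd r (tflip r)) \<and> bij (Tmap (tadd r (tflip r)))"

definition omega_of :: "'k::field \<Rightarrow> ('i::finite, 'k) ten2 \<Rightarrow> ('i, 'k) vec \<Rightarrow> ('i, 'k) vec \<Rightarrow> 'k" where
  "omega_of lam r x y = - lam * pairing (inv (Tmap (tadd r (tflip r))) x) y"

definition sharp :: "(('i::finite, 'k::field) vec \<Rightarrow> ('i, 'k) vec \<Rightarrow> 'k) \<Rightarrow> ('i, 'k) vec \<Rightarrow> ('i, 'k) vec" where
  "sharp \<omega> x = (\<lambda>i. \<omega> x (bvec i))"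

definition P_of :: "'k::field \<Rightarrow> ('i::finite, 'k) ten2 \<Rightarrow> ('i, 'k) vec \<Rightarrow> ('i, 'k) vec" where
  "P_of lam r = Tmap r \<circ> sharp (omega_of lam r)"

end

theory Submission
  imports Defs
begin

text \<open>Write t = s + tau(s). The APN-YBE expression of u is the diagonal F(u, u) of a bilinear
form F, and tau(s) = t - s, so its value at tau(s) differs from that at s by
F(t, t) - F(t, s) - F(s, t). Contracting the symmetric invariant tensor t against the structure
constants of \<open>\<circ>\<close> and \<open>\<odot>\<close> (two consequences of invariance) gives, at each entry (p, q, z),
F(t, w) + F(w, t) = \<Sum>a (w a q + w q a) K a and F(t, t) = \<Sum>a t a q K a with the same K;
for w = s the right-hand sides coincide. The rest is linear algebra: t is flip invariant,
so omega is unchanged, and P + P' = T_t omega^sharp = -lam I.\<close>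

lemma bvec_apply: "bvec a i = (if i = a then 1 else 0)"
  by (simp add: bvec_def)

lemma mult_if_zero:
  "x * (if P then y else 0) = (if P then x * y else (0::'a::mult_zero))"
  "(if P then y else 0) * x = (if P then y * x else (0::'a::mult_zero))"
  by simp_all

lemma sum_if_zero: "(\<Sum>x\<in>A. if P then f x else 0) = (if P then sum f A else (0::'a::comm_monoid_add))"
  by simp

lemmas delta_simps = bvec_apply mult_if_zero sum_if_zero sum.delta sum.delta'

definition struct_const :: "('i, 'k::field) prod \<Rightarrow> 'i \<Rightarrow> 'i \<Rightarrow> 'i \<Rightarrow> 'k" where
  "struct_const m a b i = m (bvec a) (bvec b) i"

lemma struct_const_circ: "struct_const (circ sc pr) a b i = struct_const sc a b i + struct_const pr a b i"
  by (simp add: struct_const_def circ_def vadd_def)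

lemma struct_const_odot: "struct_const (odot sc pr) a b i = struct_const sc a b i + struct_const pr b a i"
  by (simp add: struct_const_def odot_def vadd_def)

text \<open>The form F of the proof idea: the coefficient of e_p (x) e_q (x) e_z in the APN-YBE
expression, with its two factors s replaced by u and v.\<close>
definition ybe_form :: "('i::finite, 'k::field) prod \<Rightarrow> ('i, 'k) prod \<Rightarrow> ('i, 'k) ten2 \<Rightarrow> ('i, 'k) ten2 \<Rightarrow> ('i, 'k) ten3" where
  "ybe_form sc pr u v = (\<lambda>p q z.
      (\<Sum>a\<in>UNIV. \<Sum>c\<in>UNIV. u a q * v c z * struct_const (circ sc pr) a c p)
    + (\<Sum>b\<in>UNIV. \<Sum>d\<in>UNIV. u q b * v p d * struct_const (odot sc pr) b d z)
    + (\<Sum>b\<in>UNIV. \<Sum>c\<in>UNIV. u p b * v c z * struct_const pr b c q))"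

lemma apn_ybe_iff_ybe_form: "apn_ybe sc pr s \<longleftrightarrow> ybe_form sc pr s s = (\<lambda>p q z. 0)"
  unfolding apn_ybe_def ybe_form_def t3_def struct_const_def
  by (simp add: distrib_left sum.distrib delta_simps cong: if_cong)

lemma ybe_form_diff_left:
  "ybe_form sc pr (\<lambda>i j. u i j - v i j) w p q z = ybe_form sc pr u w p q z - ybe_form sc pr v w p q z"
  by (simp add: ybe_form_def algebra_simps sum_subtractf)

lemma ybe_form_diff_right:
  "ybe_form sc pr w (\<lambda>i j. u i j - v i j) p q z = ybe_form sc pr w u p q z - ybe_form sc pr w v p q z"
  by (simp add: ybe_form_def algebra_simps sum_subtractf)

lemma ybe_form_swapped:
  "ybe_form sc pr u v p q z =
      (\<Sum>c\<in>UNIV. v c z * (\<Sum>a\<in>UNIV. u a q * struct_const (circ sc pr) a c p))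
    + (\<Sum>d\<in>UNIV. v p d * (\<Sum>b\<in>UNIV. u q b * struct_const (odot sc pr) b d z))
    + (\<Sum>c\<in>UNIV. v c z * (\<Sum>b\<in>UNIV. u p b * struct_const pr b c q))"
  unfolding ybe_form_def sum_distrib_left
  by (subst (1 2 3) sum.swap) (simp add: ac_simps)

lemma tapp_id_left: "tapp id g r i j = (\<Sum>b\<in>UNIV. r i b * g (bvec b) j)"
  by (simp add: tapp_def delta_simps cong: if_cong)

lemma tapp_id_right: "tapp f id r i j = (\<Sum>a\<in>UNIV. r a j * f (bvec a) i)"
  by (simp add: tapp_def delta_simps cong: if_cong)

locale symmetric_invariant_tensor =
  fixes sc pr :: "('i::finite, 'k::field) prod" and t :: "('i, 'k) ten2"
  assumes symmetric: "t i j = t j i"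
    and invariant: "invariant_tensor sc pr t"
begin

abbreviation "S \<equiv> struct_const sc"
abbreviation "R \<equiv> struct_const pr"
abbreviation "C \<equiv> struct_const (circ sc pr)"
abbreviation "D \<equiv> struct_const (odot sc pr)"

lemma invariant_Lstar: "(\<Sum>b\<in>UNIV. t i b * (C e b j + C b e j)) = (\<Sum>a\<in>UNIV. t a j * S e a i)"
proof -
  have "tapp id (Lstar sc pr (bvec e)) t i j = tapp (sc (bvec e)) id t i j"
    using invariant by (simp add: invariant_tensor_def)
  then show ?thesis
    by (simp add: tapp_id_left tapp_id_right Lstar_def vadd_def struct_const_def)
qed

lemma invariant_Lodot: "(\<Sum>a\<in>UNIV. t a j * C e a i) = (\<Sum>b\<in>UNIV. t i b * D e b j)"
proof -
  have "tapp (circ sc pr (bvec e)) id t i j = tapp id (Lodot sc pr (bvec e)) t i j"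
    using invariant by (simp add: invariant_tensor_def)
  then show ?thesis
    by (simp add: tapp_id_left tapp_id_right Lodot_def struct_const_def)
qed

lemma circ_contraction: "(\<Sum>a\<in>UNIV. t a q * C a c p) = - (\<Sum>a\<in>UNIV. t p a * R a c q)"
proof -
  have "(\<Sum>a\<in>UNIV. t a q * C a c p) = (\<Sum>a\<in>UNIV. t a p * S c a q) - (\<Sum>a\<in>UNIV. t q a * C c a p)"
    using invariant_Lstar[of q c p]
    by (simp add: symmetric[of _ q] distrib_left sum.distrib eq_diff_eq add.commute)
  also have "\<dots> = (\<Sum>a\<in>UNIV. t p a * S c a q) - (\<Sum>a\<in>UNIV. t p a * D c a q)"
    using invariant_Lodot[of q c p] by (simp add: symmetric[of _ p] symmetric[of _ q])
  also have "\<dots> = - (\<Sum>a\<in>UNIV. t p a * R a c q)"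
    by (simp add: struct_const_odot distrib_left sum.distrib)
  finally show ?thesis .
qed

lemma odot_contraction: "(\<Sum>b\<in>UNIV. t q b * D b d z) = - (\<Sum>a\<in>UNIV. t a z * R d a q)"
proof -
  have "(\<Sum>b\<in>UNIV. t q b * D b d z)
      = (\<Sum>b\<in>UNIV. t q b * (C d b z + C b d z)) - (\<Sum>b\<in>UNIV. t q b * D d b z)"
    by (simp add: struct_const_circ struct_const_odot algebra_simps sum.distrib)
  also have "\<dots> = (\<Sum>a\<in>UNIV. t a z * S d a q) - (\<Sum>a\<in>UNIV. t a z * C d a q)"
    by (simp add: invariant_Lstar invariant_Lodot)
  also have "\<dots> = - (\<Sum>a\<in>UNIV. t a z * R d a q)"
    by (simp add: struct_const_circ distrib_left sum.distrib)
  finally show ?thesis .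
qed

lemma ybe_form_symmetric_left:
  "ybe_form sc pr t w p q z = - (\<Sum>d\<in>UNIV. w p d * (\<Sum>a\<in>UNIV. t a z * R d a q))"
  by (simp add: ybe_form_swapped circ_contraction odot_contraction sum_negf)

lemma ybe_form_symmetric_add_swap:
  "ybe_form sc pr t w p q z + ybe_form sc pr w t p q z
     = (\<Sum>a\<in>UNIV. (w a q + w q a) * (\<Sum>d\<in>UNIV. t p d * D a d z))"
proof -
  have "ybe_form sc pr w t p q z
      = (\<Sum>a\<in>UNIV. w a q * (\<Sum>c\<in>UNIV. t c z * C a c p))
      + (\<Sum>b\<in>UNIV. w q b * (\<Sum>d\<in>UNIV. t p d * D b d z))
      + (\<Sum>b\<in>UNIV. w p b * (\<Sum>c\<in>UNIV. t c z * R b c q))"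
    unfolding ybe_form_def by (simp add: sum_distrib_left ac_simps)
  then show ?thesis
    by (simp add: ybe_form_symmetric_left invariant_Lodot distrib_right sum.distrib)
qed

lemma ybe_form_symmetric_diag:
  "ybe_form sc pr t t p q z = (\<Sum>a\<in>UNIV. t a q * (\<Sum>d\<in>UNIV. t p d * D a d z))"
proof -
  have "(\<Sum>a\<in>UNIV. t a q * (\<Sum>d\<in>UNIV. t p d * D a d z))
      = (\<Sum>d\<in>UNIV. t p d * (\<Sum>a\<in>UNIV. t q a * D a d z))"
    unfolding sum_distrib_left by (subst sum.swap) (simp add: symmetric[of _ q] ac_simps)
  then show ?thesis
    by (simp add: ybe_form_symmetric_left odot_contraction sum_negf)
qed

end

lemma ybe_form_tflip:
  assumes "invariant_tensor sc pr (tadd s (tflip s))"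
  shows "ybe_form sc pr (tflip s) (tflip s) = ybe_form sc pr s s"
proof -
  define t where "t = tadd s (tflip s)"
  interpret symmetric_invariant_tensor sc pr t
    using assms by unfold_locales (simp_all add: t_def tadd_def tflip_def add.commute)
  have flip: "tflip s = (\<lambda>i j. t i j - s i j)"
    by (simp add: fun_eq_iff t_def tadd_def tflip_def)
  have "ybe_form sc pr t s p q z + ybe_form sc pr s t p q z = ybe_form sc pr t t p q z" for p q z
    unfolding ybe_form_symmetric_add_swap ybe_form_symmetric_diag
    by (simp add: t_def tadd_def tflip_def)
  then show ?thesis
    unfolding flip by (simp add: fun_eq_iff ybe_form_diff_left ybe_form_diff_right algebra_simps)
qed

lemma apn_ybe_tflip_iff:
  "invariant_tensor sc pr (tadd s (tflip s)) \<Longrightarrow> apn_ybe sc pr (tflip s) \<longleftrightarrow> apn_ybe sc pr s"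
  by (simp add: apn_ybe_iff_ybe_form ybe_form_tflip)

lemma tflip_tflip [simp]: "tflip (tflip s) = s"
  by (simp add: tflip_def)

lemma tadd_commute: "tadd r u = tadd u r"
  by (simp add: tadd_def add.commute)

lemma factorizable_tflip: "factorizable sc pr s \<Longrightarrow> factorizable sc pr (tflip s)"
  by (simp add: factorizable_def tadd_commute apn_ybe_tflip_iff)

lemma omega_of_tflip: "omega_of lam (tflip s) = omega_of lam s"
  by (simp add: fun_eq_iff omega_of_def tadd_commute)

lemma Tmap_tadd: "Tmap (tadd r u) x = vadd (Tmap r x) (Tmap u x)"
  by (simp add: Tmap_def tadd_def vadd_def distrib_left sum.distrib)

lemma Tmap_vsmul: "Tmap r (vsmul c x) = vsmul c (Tmap r x)"
  by (simp add: Tmap_def vsmul_def sum_distrib_left ac_simps)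

lemma sharp_omega_of: "sharp (omega_of lam r) x = vsmul (- lam) (inv (Tmap (tadd r (tflip r))) x)"
  by (simp add: sharp_def omega_of_def pairing_def vsmul_def delta_simps cong: if_cong)

lemma P_of_add_P_of_tflip:
  assumes "bij (Tmap (tadd s (tflip s)))"
  shows "vadd (P_of lam s x) (P_of lam (tflip s) x) = vsmul (- lam) x"
proof -
  let ?T = "Tmap (tadd s (tflip s))"
  have "vadd (P_of lam s x) (P_of lam (tflip s) x) = ?T (sharp (omega_of lam s) x)"
    by (simp add: P_of_def omega_of_tflip Tmap_tadd)
  also have "\<dots> = vsmul (- lam) (?T (inv ?T x))"
    by (simp add: sharp_omega_of Tmap_vsmul)
  also have "\<dots> = vsmul (- lam) x"
    using assms by (simp add: bij_is_surj surj_f_inv_f)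
  finally show ?thesis .
qed

lemma P_of_tflip:
  assumes "bij (Tmap (tadd s (tflip s)))"
  shows "P_of lam (tflip s) = (\<lambda>x. vsub (vsmul (- lam) x) (P_of lam s x))"
proof
  fix x
  show "P_of lam (tflip s) x = vsub (vsmul (- lam) x) (P_of lam s x)"
    using P_of_add_P_of_tflip[OF assms, of lam x]
    by (simp add: vadd_def vsub_def fun_eq_iff eq_diff_eq add.commute)
qed

theorem mainTheorem19:
  fixes sc pr :: "('i::finite \<Rightarrow> 'k::field) \<Rightarrow> ('i \<Rightarrow> 'k) \<Rightarrow> ('i \<Rightarrow> 'k)"
    and s :: "'i \<Rightarrow> 'i \<Rightarrow> 'k"
    and lam :: 'k
  assumes "bilinear_op sc" and "bilinear_op pr"
    and "anti_pre_novikov sc pr"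
    and "factorizable sc pr s"
    and "lam \<noteq> 0"
  shows "factorizable sc pr (tflip s)
    \<and> omega_of lam (tflip s) = omega_of lam s
    \<and> P_of lam (tflip s) = (\<lambda>x. vsub (vsmul (- lam) x) (P_of lam s x))"
proof -
  have "bij (Tmap (tadd s (tflip s)))"
    using \<open>factorizable sc pr s\<close> by (simp add: factorizable_def)
  then show ?thesis
    using factorizable_tflip[OF \<open>factorizable sc pr s\<close>] omega_of_tflip P_of_tflip by blast
qed

end
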